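(* Let $\alpha>1$ and constants $0<c\le C$ and $c_0>0$. Consider, for each $N\ge2$, a number of tasks $K=K(N)\ge c_0N$ and test proportions ${\bm{p}}={\bm{p}}^{(N)}\in\Delta_K$ with $c\,k^{-\alpha}\le p_k\le C\,k^{-\alpha}$ for all $k\le K$. For the memorization model with $L_N({\bm{p}},{\bm{q}})=\sum_{k=1}^K p_k(1-q_k)^N$, $L^{\mathrm{same}}({\bm{p}})=L_N({\bm{p}},{\bm{p}})$ and $L^*({\bm{p}})=\min_{{\bm{q}}\in\Delta_K}L_N({\bm{p}},{\bm{q}})$, we have, as $N\to\infty$, $$L^{\mathrm{same}}({\bm{p}})=\Theta\!\left(N^{-1+\frac{1}{\alpha}}\right),\qquad L^*({\bm{p}})=\Theta\!\left(N^{-\alpha+1}\right),$$ where the implied constants depend only on $\alpha,c,C,c_0$.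
   Context: $\Delta_K=\{{\bm{r}}\in\mathbb{R}^K:{\bm{r}}\ge0,\ \sum_k r_k=1\}$. Memorization model: each of $K$ tasks is memorizing a unique atom; the test distribution is the mixture of the tasks with proportions ${\bm{p}}$; training uses $N$ i.i.d. samples from the mixture with proportions ${\bm{q}}$, and the error on task $k$ is $1$ if no training example from task $k$ was seen and $0$ otherwise, giving the expected test loss $L_N({\bm{p}},{\bm{q}})=\sum_k p_k(1-q_k)^N$. The paper states the hypotheses as $p_k=\Theta(k^{-\alpha})$ and $K=\Omega(N)$. *)

theory Defs
  imports "HOL-Analysis.Analysis"
begin

text \<open>Probability task_simplex on the task indices 1..K (values outside 1..K are irrelevant).\<close>
definition task_simplex :: "nat \<Rightarrow> (nat \<Rightarrow> real) set" where
  "task_simplex K = {r. (\<forall>k\<in>{1..K}. 0 \<le> r k) \<and> (\<Sum>k=1..K. r k) = 1}"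

definition L :: "nat \<Rightarrow> nat \<Rightarrow> (nat \<Rightarrow> real) \<Rightarrow> (nat \<Rightarrow> real) \<Rightarrow> real" where
  "L N K p q = (\<Sum>k=1..K. p k * (1 - q k) ^ N)"

definition L_same :: "nat \<Rightarrow> nat \<Rightarrow> (nat \<Rightarrow> real) \<Rightarrow> real" where
  "L_same N K p = L N K p p"

text \<open>Optimal loss: minimum (infimum, attained by compactness) over the task_simplex.\<close>
definition L_star :: "nat \<Rightarrow> nat \<Rightarrow> (nat \<Rightarrow> real) \<Rightarrow> real" where
  "L_star N K p = (INF q\<in>task_simplex K. L N K p q)"

end

theory Submission
  imports Defs "HOL-Real_Asymp.Real_Asymp"
begin

(* A summand p_k (1 - p_k)^N of L_same is at most min(p_k, 1/N). Splitting the sum at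
   k ~ N^(1/alpha) bounds the head by N^(1/alpha)/N and the tail by the power tail
   N^((1-alpha)/alpha). Conversely, on the block of indices between (C N)^(1/alpha) and twice that
   we have p_k <= 1/N, hence (1 - p_k)^N >= e^(-2), and these ~N^(1/alpha) terms of size
   ~N^(-1) give the matching lower bound.

   For L_star, the allocation q_k = (alpha ln(M/k) + 1)/N on the first M ~ N/(alpha+1) tasks
   (total mass <= 1 because sum_k ln(M/k) <= M) makes each head summand at most
   C e^(-1) M^(-alpha), while the tail beyond M contributes O(M^(1-alpha)). Conversely, for any
   q the first n = min(K, N) tasks, n >= const N, have p_k >= c n^(-alpha), and by convexity of
   t -> t^N their factors (1 - q_k)^N sum to at least n (1 - 1/n)^N >= n e^(-2N/n). *)

lemma powr_neg_le_diff_powr: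
  fixes \<alpha> x :: real
  assumes "\<alpha> > 1" and "x > 0"
  shows "(x + 1) powr (-\<alpha>) \<le> (x powr (1 - \<alpha>) - (x + 1) powr (1 - \<alpha>)) / (\<alpha> - 1)"
proof -
  have deriv: "((\<lambda>t. t powr (1 - \<alpha>)) has_real_derivative (1 - \<alpha>) * t powr (1 - \<alpha> - 1)) (at t)"
    if "x \<le> t" "t \<le> x + 1" for t
    using that assms by (auto intro!: derivative_eq_intros)
  obtain z where z: "x < z" "z < x + 1"
    and mvt: "(x + 1) powr (1 - \<alpha>) - x powr (1 - \<alpha>) = (x + 1 - x) * ((1 - \<alpha>) * z powr (1 - \<alpha> - 1))"
    using MVT2[of x "x + 1", OF _ deriv] by auto
  have "(x + 1) powr (-\<alpha>) \<le> z powr (-\<alpha>)"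
    using z assms by (intro powr_mono2') auto
  then have "(\<alpha> - 1) * (x + 1) powr (-\<alpha>) \<le> (\<alpha> - 1) * z powr (-\<alpha>)"
    using assms by (intro mult_left_mono) auto
  also have "\<dots> = x powr (1 - \<alpha>) - (x + 1) powr (1 - \<alpha>)"
    using mvt by (simp add: algebra_simps)
  finally show ?thesis
    using assms by (simp add: field_simps)
qed

lemma sum_powr_neg_tail_le:
  fixes \<alpha> :: real
  assumes "\<alpha> > 1" and "m \<ge> 1"
  shows "(\<Sum>k=m+1..n. real k powr (-\<alpha>)) \<le> real m powr (1 - \<alpha>) / (\<alpha> - 1)"
proof (cases "m \<le> n")
  case True
  have "(\<Sum>k=m+1..n. real k powr (-\<alpha>)) \<le> (real m powr (1 - \<alpha>) - real n powr (1 - \<alpha>)) / (\<alpha> - 1)"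
    using True
  proof (induction n rule: dec_induct)
    case (step n)
    have "(\<Sum>k=m+1..Suc n. real k powr (-\<alpha>))
        = (\<Sum>k=m+1..n. real k powr (-\<alpha>)) + real (Suc n) powr (-\<alpha>)"
      using step.hyps by simp
    also have "\<dots> \<le> (real m powr (1 - \<alpha>) - real n powr (1 - \<alpha>)) / (\<alpha> - 1)
        + (real n powr (1 - \<alpha>) - real (Suc n) powr (1 - \<alpha>)) / (\<alpha> - 1)"
      using step powr_neg_le_diff_powr[OF assms(1), of "real n"] assms(2)
      by (intro add_mono) (auto simp: add.commute)
    finally show ?case
      by (simp add: diff_divide_distrib)
  qed simp
  also have "\<dots> \<le> real m powr (1 - \<alpha>) / (\<alpha> - 1)"
    using assms(1) by (intro divide_right_mono) auto
  finally show ?thesis .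
qed (use assms in simp)

lemma sum_ln_div_le: "(\<Sum>k=1..M. ln (real M / real k)) \<le> real M"
proof (induction M)
  case (Suc M)
  show ?case
  proof (cases "M = 0")
    case False
    have "1 + 1 / real M = real (Suc M) / real M"
      using False by (simp add: field_simps)
    then have "ln (real (Suc M)) - ln (real M) = ln (1 + 1 / real M)"
      using False by (simp add: ln_div)
    also have "\<dots> \<le> 1 / real M"
      using False by (intro ln_add_one_self_le_self) auto
    finally have growth: "real M * (ln (real (Suc M)) - ln (real M)) \<le> 1"
      using False by (simp add: field_simps)
    have "(\<Sum>k=1..Suc M. ln (real (Suc M) / real k))
        = (\<Sum>k=1..M. ln (real M / real k) + (ln (real (Suc M)) - ln (real M)))"
      using False by (simp add: ln_div)
    also have "\<dots> = (\<Sum>k=1..M. ln (real M / real k)) + real M * (ln (real (Suc M)) - ln (real M))"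
      by (simp add: sum.distrib)
    finally show ?thesis
      using Suc.IH growth by simp
  qed simp
qed simp

lemma one_minus_power_le_exp:
  fixes q :: real
  assumes "q \<le> 1"
  shows "(1 - q) ^ N \<le> exp (- real N * q)"
proof -
  have "(1 - q) ^ N \<le> exp (-q) ^ N"
    using assms exp_ge_add_one_self[of "-q"] by (intro power_mono) auto
  then show ?thesis
    by (simp add: exp_of_nat_mult[symmetric])
qed

lemma exp_le_one_minus_power:
  fixes x :: real
  assumes "0 \<le> x" and "x \<le> 1/2"
  shows "exp (-2 * real N * x) \<le> (1 - x) ^ N"
proof -
  have "x * x \<le> x * (1/2)"
    using assms by (intro mult_left_mono) auto
  then have "-2 * x \<le> - x - 2 * x\<^sup>2"
    by (simp add: power2_eq_square)
  also have "\<dots> \<le> ln (1 - x)"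
    by (rule ln_one_minus_pos_lower_bound[OF assms])
  finally have "exp (-2 * x) \<le> 1 - x"
    using assms by (simp add: ln_ge_iff)
  then have "exp (-2 * x) ^ N \<le> (1 - x) ^ N"
    by (intro power_mono) auto
  then show ?thesis
    by (simp add: exp_of_nat_mult[symmetric] mult.assoc mult.left_commute)
qed

lemma mult_one_minus_power_le:
  fixes p :: real
  assumes "0 \<le> p" and "p \<le> 1" and "N > 0"
  shows "p * (1 - p) ^ N \<le> 1 / real N"
proof -
  have "p * (1 - p) ^ N \<le> p * exp (- real N * p)"
    using assms by (intro mult_left_mono one_minus_power_le_exp) auto
  also have "\<dots> = (real N * p) * exp (- (real N * p)) / real N"
    using assms by simp
  also have "\<dots> \<le> 1 / real N"
  proof -
    have "real N * p \<le> exp (real N * p)"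
      using exp_ge_add_one_self[of "real N * p"] by linarith
    then show ?thesis
      by (intro divide_right_mono) (auto simp: exp_minus field_simps)
  qed
  finally show ?thesis .
qed

lemma power_ge_tangent:
  fixes s y :: real
  assumes "s > 0" and "y \<ge> 0"
  shows "s ^ N + real N * s ^ (N - 1) * (y - s) \<le> y ^ N"
proof -
  have "s ^ N * (1 + real N * (y / s - 1)) \<le> s ^ N * (1 + (y / s - 1)) ^ N"
    using assms by (intro mult_left_mono Bernoulli_inequality) auto
  moreover have "s ^ N * (1 + real N * (y / s - 1)) = s ^ N + real N * s ^ (N - 1) * (y - s)"
    using assms by (cases N) (simp_all add: field_simps)
  ultimately show ?thesis
    using assms by (simp add: power_divide)
qed

lemma sum_one_minus_power_ge:
  fixes q :: "'a \<Rightarrow> real"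
  assumes "finite A" and "card A \<ge> 2" and "\<forall>k\<in>A. q k \<le> 1" and "(\<Sum>k\<in>A. q k) \<le> 1"
  shows "real (card A) * (1 - 1 / real (card A)) ^ N \<le> (\<Sum>k\<in>A. (1 - q k) ^ N)"
proof -
  define s where "s = 1 - 1 / real (card A)"
  have s: "s > 0" "real (card A) * (1 - s) = 1"
    using assms(2) by (auto simp: s_def field_simps)
  have "real (card A) * s ^ N
      \<le> real (card A) * s ^ N + real N * s ^ (N - 1) * (real (card A) * (1 - s) - (\<Sum>k\<in>A. q k))"
    using s assms(4) by simp
  also have "\<dots> = (\<Sum>k\<in>A. s ^ N + real N * s ^ (N - 1) * ((1 - q k) - s))"
    by (simp add: sum.distrib sum_subtractf sum_distrib_left[symmetric] sum_distrib_right[symmetric]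
        algebra_simps)
  also have "\<dots> \<le> (\<Sum>k\<in>A. (1 - q k) ^ N)"
    using s assms(3) by (intro sum_mono power_ge_tangent) auto
  finally show ?thesis
    unfolding s_def .
qed

lemma task_simplex_bounds:
  assumes "q \<in> task_simplex K" and "k \<in> {1..K}"
  shows "0 \<le> q k" and "q k \<le> 1"
proof -
  have nonneg: "\<forall>j\<in>{1..K}. 0 \<le> q j" and sum: "(\<Sum>j=1..K. q j) = 1"
    using assms(1) by (auto simp: task_simplex_def)
  show "0 \<le> q k"
    using nonneg assms(2) by blast
  have "q k \<le> (\<Sum>j=1..K. q j)"
    using nonneg assms(2) by (intro member_le_sum) auto
  then show "q k \<le> 1"
    using sum by simp
qed

lemma task_simplex_top_up:
  assumes "K \<ge> 1" and "\<forall>k\<in>{1..K}. 0 \<le> h k" and "(\<Sum>k=1..K. h k) \<le> 1"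
  shows "(\<lambda>k. h k + (if k = 1 then 1 - (\<Sum>j=1..K. h j) else 0)) \<in> task_simplex K"
  using assms by (auto simp: task_simplex_def sum.distrib)

lemma L_star_le:
  assumes "\<forall>k\<in>{1..K}. 0 \<le> p k" and "q \<in> task_simplex K"
  shows "L_star N K p \<le> L N K p q"
  unfolding L_star_def
proof (rule cINF_lower[OF _ assms(2)])
  have "0 \<le> L N K p r" if "r \<in> task_simplex K" for r
    unfolding L_def using assms(1) task_simplex_bounds[OF that] by (intro sum_nonneg) auto
  then show "bdd_below (L N K p ` task_simplex K)"
    by (intro bdd_belowI2)
qed

lemma L_star_ge:
  assumes "K \<ge> 1" and "\<And>q. q \<in> task_simplex K \<Longrightarrow> b \<le> L N K p q"
  shows "b \<le> L_star N K p"
  unfolding L_star_def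
proof (rule cINF_greatest)
  show "task_simplex K \<noteq> {}"
    using task_simplex_top_up[of K "\<lambda>_. 0"] assms(1) by auto
qed (use assms(2) in auto)

lemma sum_le_head_powr_tail:
  fixes f :: "nat \<Rightarrow> real" and \<alpha> A C :: real
  assumes "\<alpha> > 1" and "T \<ge> 1" and "A \<ge> 0" and "C \<ge> 0"
    and head: "\<And>k. k \<in> {1..K} \<Longrightarrow> k \<le> T \<Longrightarrow> f k \<le> A"
    and tail: "\<And>k. k \<in> {1..K} \<Longrightarrow> T < k \<Longrightarrow> f k \<le> C * real k powr (-\<alpha>)"
  shows "(\<Sum>k=1..K. f k) \<le> real T * A + C * (real T powr (1 - \<alpha>) / (\<alpha> - 1))"
proof -
  have "(\<Sum>k=1..K. f k) = (\<Sum>k\<in>{1..K} \<inter> {..T}. f k) + (\<Sum>k\<in>{1..K} - {..T}. f k)"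
    by (rule sum.Int_Diff) simp
  also have "(\<Sum>k\<in>{1..K} \<inter> {..T}. f k) \<le> real (card ({1..K} \<inter> {..T})) * A"
    using head by (intro sum_bounded_above) auto
  also have "\<dots> \<le> real T * A"
  proof -
    have "card ({1..K} \<inter> {..T}) \<le> card {1..T}"
      by (intro card_mono) auto
    then show ?thesis
      using \<open>A \<ge> 0\<close> by (intro mult_right_mono) auto
  qed
  also have "{1..K} - {..T} = {T+1..K}"
    using \<open>T \<ge> 1\<close> by auto
  also have "(\<Sum>k\<in>{T+1..K}. f k) \<le> (\<Sum>k=T+1..K. C * real k powr (-\<alpha>))"
    using tail \<open>T \<ge> 1\<close> by (intro sum_mono) auto
  also have "\<dots> \<le> C * (real T powr (1 - \<alpha>) / (\<alpha> - 1))"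
    unfolding sum_distrib_left[symmetric]
    using sum_powr_neg_tail_le[OF assms(1,2)] \<open>C \<ge> 0\<close> by (intro mult_left_mono)
  finally show ?thesis
    by simp
qed

lemma nat_floor_powr_le:
  fixes x e :: real
  assumes "x \<ge> 1" and "e \<le> 0"
  shows "real (nat \<lfloor>x\<rfloor>) powr e \<le> 2 powr (-e) * x powr e"
proof -
  have "1 \<le> \<lfloor>x\<rfloor>"
    using assms(1) by simp
  then have "x / 2 \<le> real (nat \<lfloor>x\<rfloor>)"
    using floor_correct[of x] by linarith
  then have "real (nat \<lfloor>x\<rfloor>) powr e \<le> (x / 2) powr e"
    using assms by (intro powr_mono2') auto
  also have "\<dots> = 2 powr (-e) * x powr e"
    by (simp add: powr_divide powr_minus field_simps)
  finally show ?thesis .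
qed

lemma L_same_upper:
  fixes \<alpha> C :: real
  assumes "\<alpha> > 1" and "C \<ge> 0" and "N > 0" and p: "p \<in> task_simplex K"
    and upper: "\<forall>k\<in>{1..K}. p k \<le> C * real k powr (-\<alpha>)"
  shows "L_same N K p \<le> (1 + C * 2 powr (\<alpha> - 1) / (\<alpha> - 1)) * real N powr (-1 + 1/\<alpha>)"
proof -
  define x where "x = real N powr (1/\<alpha>)"
  define T where "T = nat \<lfloor>x\<rfloor>"
  have x: "x \<ge> 1"
    unfolding x_def using assms by (intro ge_one_powr_ge_zero) auto
  then have T: "T \<ge> 1" "real T \<le> x"
    unfolding T_def by linarith+
  have x_div_N: "x / real N = real N powr (-1 + 1/\<alpha>)"
    unfolding x_def using powr_diff[of "real N" "1/\<alpha>" 1] assms(3) by (simp add: add.commute)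
  have x_powr: "x powr (1 - \<alpha>) = real N powr (-1 + 1/\<alpha>)"
    unfolding x_def using assms by (simp add: powr_powr field_simps)
  have T_powr: "real T powr (1 - \<alpha>) \<le> 2 powr (\<alpha> - 1) * real N powr (-1 + 1/\<alpha>)"
    using nat_floor_powr_le[OF x, of "1 - \<alpha>"] assms x_powr unfolding T_def by simp
  have "L_same N K p \<le> real T * (1 / real N) + C * (real T powr (1 - \<alpha>) / (\<alpha> - 1))"
    unfolding L_same_def L_def
  proof (rule sum_le_head_powr_tail)
    fix k assume k: "k \<in> {1..K}"
    show "p k * (1 - p k) ^ N \<le> 1 / real N"
      using task_simplex_bounds[OF p k] assms by (intro mult_one_minus_power_le)
    have "p k * (1 - p k) ^ N \<le> p k"
      using task_simplex_bounds[OF p k] by (intro mult_left_le power_le_one) auto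
    then show "p k * (1 - p k) ^ N \<le> C * real k powr (-\<alpha>)"
      using upper k by fastforce
  qed (use assms T in auto)
  also have "real T * (1 / real N) \<le> real N powr (-1 + 1/\<alpha>)"
    using divide_right_mono[OF T(2), of "real N"] x_div_N by simp
  also have "C * (real T powr (1 - \<alpha>) / (\<alpha> - 1))
      \<le> C * (2 powr (\<alpha> - 1) * real N powr (-1 + 1/\<alpha>) / (\<alpha> - 1))"
    using T_powr assms by (intro mult_left_mono divide_right_mono) auto
  finally show ?thesis
    by (simp add: algebra_simps)
qed

lemma L_same_lower:
  fixes \<alpha> c C :: real
  assumes "\<alpha> > 1" and "c \<ge> 0" and "C > 0" and "N \<ge> 2" and "C * real N \<ge> 1"
    and K: "2 * ((C * real N) powr (1/\<alpha>) + 1) \<le> real K"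
    and p: "p \<in> task_simplex K"
    and bounds: "\<forall>k\<in>{1..K}. c * real k powr (-\<alpha>) \<le> p k \<and> p k \<le> C * real k powr (-\<alpha>)"
  shows "c * exp (-2) * 2 powr (1 - 2*\<alpha>) * C powr (-1 + 1/\<alpha>) * real N powr (-1 + 1/\<alpha>)
    \<le> L_same N K p"
proof -
  define x where "x = (C * real N) powr (1/\<alpha>)"
  define T where "T = nat \<lceil>x\<rceil>"
  have x: "x \<ge> 1"
    unfolding x_def using assms by (intro ge_one_powr_ge_zero) auto
  then have T: "x \<le> real T" "real T \<le> x + 1" "T \<ge> 1"
    unfolding T_def by linarith+
  have "real (2 * T) \<le> real K"
    using K T(2) unfolding x_def[symmetric] by simp
  then have "2 * T \<le> K"
    by linarith
  have C_x: "C * x powr (-\<alpha>) = 1 / real N"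
    unfolding x_def using assms by (simp add: powr_powr powr_minus field_simps)
  have summand_lower: "c * (2 * real T) powr (-\<alpha>) * exp (-2) \<le> p k * (1 - p k) ^ N"
    if k: "k \<in> {T..2*T}" for k
  proof -
    have kK: "k \<in> {1..K}"
      using k T(3) \<open>2 * T \<le> K\<close> by auto
    have "p k \<le> C * real k powr (-\<alpha>)"
      using bounds kK by blast
    also have "\<dots> \<le> C * x powr (-\<alpha>)"
      using k T x assms by (intro mult_left_mono powr_mono2') auto
    finally have "p k \<le> 1 / real N"
      using C_x by simp
    have "exp (-2) \<le> (1 - 1 / real N) ^ N"
      using exp_le_one_minus_power[of "1 / real N" N] assms by simp
    also have "\<dots> \<le> (1 - p k) ^ N"
      using \<open>p k \<le> 1 / real N\<close> assms by (intro power_mono) auto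
    finally have "exp (-2) \<le> (1 - p k) ^ N" .
    moreover have "c * (2 * real T) powr (-\<alpha>) \<le> c * real k powr (-\<alpha>)"
      using k T assms by (intro mult_left_mono powr_mono2') auto
    then have "c * (2 * real T) powr (-\<alpha>) \<le> p k"
      using bounds kK by fastforce
    ultimately show ?thesis
      using task_simplex_bounds[OF p kK] by (intro mult_mono) auto
  qed
  have "c * exp (-2) * 2 powr (1 - 2*\<alpha>) * C powr (-1 + 1/\<alpha>) * real N powr (-1 + 1/\<alpha>)
      = c * exp (-2) * 2 powr (-\<alpha>) * (2 * x) powr (1 - \<alpha>)"
    unfolding x_def using assms
    by (simp add: powr_mult powr_powr powr_add[symmetric] field_simps)
  also have "\<dots> \<le> c * exp (-2) * 2 powr (-\<alpha>) * real T powr (1 - \<alpha>)"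
    using T x assms by (intro mult_left_mono powr_mono2') auto
  also have "\<dots> = real T * (c * (2 * real T) powr (-\<alpha>) * exp (-2))"
    by (simp add: powr_mult powr_mult_base)
  also have "\<dots> \<le> real (card {T..2*T}) * (c * (2 * real T) powr (-\<alpha>) * exp (-2))"
    using assms by (intro mult_right_mono) auto
  also have "\<dots> \<le> (\<Sum>k\<in>{T..2*T}. p k * (1 - p k) ^ N)"
    using summand_lower by (intro sum_bounded_below)
  also have "\<dots> \<le> L_same N K p"
    unfolding L_same_def L_def using T(3) \<open>2 * T \<le> K\<close> task_simplex_bounds[OF p]
    by (intro sum_mono2) auto
  finally show ?thesis .
qed

lemma L_star_lower:
  fixes \<alpha> c d :: real
  assumes "\<alpha> > 1" and "c \<ge> 0" and "0 < d" and "d \<le> 1"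
    and "2 \<le> d * real N" and "d * real N \<le> real K"
    and p: "p \<in> task_simplex K" and lower: "\<forall>k\<in>{1..K}. c * real k powr (-\<alpha>) \<le> p k"
  shows "c * exp (-2/d) * real N powr (-\<alpha> + 1) \<le> L_star N K p"
proof (rule L_star_ge)
  define n where "n = min K N"
  have "d * real N \<le> real N"
    using assms mult_right_mono[of d 1 "real N"] by simp
  then have n: "2 \<le> n" "n \<le> K" "n \<le> N" "d * real N \<le> real n"
    using assms unfolding n_def by (auto simp: min_def)
  then show "K \<ge> 1"
    by simp
  fix q assume q: "q \<in> task_simplex K"
  have "exp (-2/d) \<le> exp (-2 * real N * (1 / real n))"
    using n assms by (simp add: field_simps)
  also have "\<dots> \<le> (1 - 1 / real n) ^ N"
    using n by (intro exp_le_one_minus_power) auto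
  finally have "c * exp (-2/d) * real N powr (-\<alpha> + 1)
      \<le> c * (1 - 1 / real n) ^ N * real n powr (-\<alpha> + 1)"
    using n assms by (intro mult_mono mult_left_mono powr_mono2') auto
  also have "\<dots> = c * real n powr (-\<alpha>) * (real (card {1..n}) * (1 - 1 / real (card {1..n})) ^ N)"
    using powr_mult_base[of "real n" "-\<alpha>"] by (simp add: mult.commute add.commute)
  also have "\<dots> \<le> c * real n powr (-\<alpha>) * (\<Sum>k=1..n. (1 - q k) ^ N)"
  proof -
    have "(\<Sum>k=1..n. q k) \<le> (\<Sum>k=1..K. q k)"
      using n task_simplex_bounds[OF q] by (intro sum_mono2) auto
    then have "(\<Sum>k=1..n. q k) \<le> 1"
      using q by (simp add: task_simplex_def)
    then show ?thesis
      using n task_simplex_bounds[OF q] assms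
      by (intro mult_left_mono sum_one_minus_power_ge) auto
  qed
  also have "\<dots> \<le> (\<Sum>k=1..n. p k * (1 - q k) ^ N)"
    unfolding sum_distrib_left
  proof (intro sum_mono mult_right_mono)
    fix k assume k: "k \<in> {1..n}"
    then have "c * real n powr (-\<alpha>) \<le> c * real k powr (-\<alpha>)"
      using assms by (intro mult_left_mono powr_mono2') auto
    moreover have "k \<in> {1..K}"
      using k n by auto
    ultimately show "c * real n powr (-\<alpha>) \<le> p k"
      using lower by fastforce
    show "0 \<le> (1 - q k) ^ N"
      using task_simplex_bounds[OF q] k n by simp
  qed
  also have "\<dots> \<le> L N K p q"
    unfolding L_def using n task_simplex_bounds[OF p] task_simplex_bounds[OF q]
    by (intro sum_mono2) auto
  finally show "c * exp (-2/d) * real N powr (-\<alpha> + 1) \<le> L N K p q" .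
qed

lemma L_star_upper_cutoff:
  fixes \<alpha> C :: real
  assumes "\<alpha> > 1" and "C \<ge> 0" and "K \<ge> 1" and "M \<ge> 1" and M: "(\<alpha> + 1) * real M \<le> real N"
    and p: "p \<in> task_simplex K" and upper: "\<forall>k\<in>{1..K}. p k \<le> C * real k powr (-\<alpha>)"
  shows "L_star N K p \<le> C * (exp (-1) + 1 / (\<alpha> - 1)) * real M powr (1 - \<alpha>)"
proof -
  have "0 < (\<alpha> + 1) * real M"
    using assms by simp
  then have "real N > 0"
    using M by linarith
  define h where "h k = (if k \<le> M then (\<alpha> * ln (real M / real k) + 1) / real N else 0)" for k
  define q where "q k = h k + (if k = 1 then 1 - (\<Sum>j=1..K. h j) else 0)" for k
  have h_nonneg: "0 \<le> h k" if "k \<ge> 1" for k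
    using that assms \<open>real N > 0\<close> by (simp add: h_def)
  have "(\<Sum>k=1..K. h k) \<le> (\<Sum>k=1..max K M. h k)"
    using h_nonneg by (intro sum_mono2) auto
  also have "\<dots> = (\<Sum>k=1..M. h k)"
    by (intro sum.mono_neutral_right) (auto simp: h_def)
  also have "\<dots> = (\<alpha> * (\<Sum>k=1..M. ln (real M / real k)) + real M) / real N"
    by (simp add: h_def sum_divide_distrib[symmetric] sum.distrib sum_distrib_left)
  also have "\<dots> \<le> (\<alpha> * real M + real M) / real N"
    using sum_ln_div_le[of M] assms \<open>real N > 0\<close>
    by (intro divide_right_mono add_mono mult_left_mono) auto
  also have "\<dots> \<le> 1"
    using M \<open>real N > 0\<close> by (simp add: algebra_simps)
  finally have h_sum: "(\<Sum>k=1..K. h k) \<le> 1" .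
  then have "q \<in> task_simplex K"
    unfolding q_def using assms h_nonneg by (intro task_simplex_top_up) auto
  have "L_star N K p \<le> L N K p q"
    using task_simplex_bounds(1)[OF p] \<open>q \<in> task_simplex K\<close> by (intro L_star_le) auto
  also have "\<dots> \<le> real M * (C * exp (-1) * real M powr (-\<alpha>))
      + C * (real M powr (1 - \<alpha>) / (\<alpha> - 1))"
    unfolding L_def
  proof (rule sum_le_head_powr_tail)
    fix k assume k: "k \<in> {1..K}"
    have p_k: "0 \<le> p k" "p k \<le> C * real k powr (-\<alpha>)"
      using task_simplex_bounds[OF p k] upper k by auto
    have "h k \<le> q k"
      unfolding q_def using h_sum by simp
    have "p k * (1 - q k) ^ N \<le> p k * exp (- real N * q k)"
      using task_simplex_bounds[OF \<open>q \<in> task_simplex K\<close> k] p_k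
      by (intro mult_left_mono one_minus_power_le_exp) auto
    also have "\<dots> \<le> p k * exp (- real N * h k)"
      using \<open>h k \<le> q k\<close> \<open>real N > 0\<close> p_k by (intro mult_left_mono) auto
    finally have decay: "p k * (1 - q k) ^ N \<le> p k * exp (- real N * h k)" .
    show "p k * (1 - q k) ^ N \<le> C * exp (-1) * real M powr (-\<alpha>)" if "k \<le> M"
    proof -
      have "- real N * h k = -1 + (-\<alpha>) * ln (real M / real k)"
        using that \<open>real N > 0\<close> by (simp add: h_def field_simps)
      then have exp_h: "exp (- real N * h k) = exp (-1) * (real M / real k) powr (-\<alpha>)"
        using that k by (simp add: powr_def mult_exp_exp)
      have "p k * exp (- real N * h k)
          \<le> C * real k powr (-\<alpha>) * (exp (-1) * (real M / real k) powr (-\<alpha>))"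
        unfolding exp_h using p_k by (intro mult_right_mono) auto
      also have "\<dots> = C * exp (-1) * real M powr (-\<alpha>)"
        using k by (simp add: powr_divide)
      finally show ?thesis
        using decay by linarith
    qed
    show "p k * (1 - q k) ^ N \<le> C * real k powr (-\<alpha>)" if "M < k"
      using decay that p_k by (simp add: h_def)
  qed (use assms in auto)
  also have "\<dots> = C * (exp (-1) + 1 / (\<alpha> - 1)) * real M powr (1 - \<alpha>)"
    using powr_mult_base[of "real M" "-\<alpha>"] by (simp add: algebra_simps)
  finally show ?thesis .
qed

lemma L_star_upper:
  fixes \<alpha> C :: real
  assumes "\<alpha> > 1" and "C \<ge> 0" and "K \<ge> 1" and N: "\<alpha> + 1 \<le> real N"
    and p: "p \<in> task_simplex K" and upper: "\<forall>k\<in>{1..K}. p k \<le> C * real k powr (-\<alpha>)"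
  shows "L_star N K p
    \<le> C * (exp (-1) + 1 / (\<alpha> - 1)) * (2 * (\<alpha> + 1)) powr (\<alpha> - 1) * real N powr (-\<alpha> + 1)"
proof -
  define x where "x = real N / (\<alpha> + 1)"
  define M where "M = nat \<lfloor>x\<rfloor>"
  have x: "x \<ge> 1"
    unfolding x_def using assms by simp
  then have "1 \<le> \<lfloor>x\<rfloor>"
    by simp
  then have "M \<ge> 1"
    unfolding M_def by linarith
  have "real M \<le> x"
    unfolding M_def using x by linarith
  then have "(\<alpha> + 1) * real M \<le> real N"
    using assms by (simp add: x_def le_divide_eq mult.commute)
  have "real M powr (1 - \<alpha>) \<le> 2 powr (\<alpha> - 1) * x powr (1 - \<alpha>)"
    using nat_floor_powr_le[OF x, of "1 - \<alpha>"] assms unfolding M_def by simp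
  also have "x powr (1 - \<alpha>) = (\<alpha> + 1) powr (\<alpha> - 1) * real N powr (-\<alpha> + 1)"
  proof -
    have "(\<alpha> + 1) powr (1 - \<alpha>) = inverse ((\<alpha> + 1) powr (\<alpha> - 1))"
      using powr_minus[of "\<alpha> + 1" "\<alpha> - 1"] by simp
    then show ?thesis
      unfolding x_def powr_divide by (simp add: divide_inverse add.commute)
  qed
  also have "2 powr (\<alpha> - 1) * ((\<alpha> + 1) powr (\<alpha> - 1) * real N powr (-\<alpha> + 1))
      = (2 * (\<alpha> + 1)) powr (\<alpha> - 1) * real N powr (-\<alpha> + 1)"
    using powr_mult[of 2 "\<alpha> + 1" "\<alpha> - 1"] assms by simp
  finally have M_powr:
    "real M powr (1 - \<alpha>) \<le> (2 * (\<alpha> + 1)) powr (\<alpha> - 1) * real N powr (-\<alpha> + 1)" .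
  have "L_star N K p \<le> C * (exp (-1) + 1 / (\<alpha> - 1)) * real M powr (1 - \<alpha>)"
    using assms \<open>M \<ge> 1\<close> \<open>(\<alpha> + 1) * real M \<le> real N\<close> by (intro L_star_upper_cutoff)
  also have "\<dots>
      \<le> C * (exp (-1) + 1 / (\<alpha> - 1)) * ((2 * (\<alpha> + 1)) powr (\<alpha> - 1) * real N powr (-\<alpha> + 1))"
    using M_powr assms by (intro mult_left_mono) auto
  finally show ?thesis
    by (simp add: mult.assoc)
qed

theorem corollary4p3:
  fixes \<alpha> c C c\<^sub>0 :: real
  assumes "\<alpha> > 1" and "0 < c" and "c \<le> C" and "c\<^sub>0 > 0"
  shows "\<exists>N\<^sub>0 a\<^sub>1 a\<^sub>2 b\<^sub>1 b\<^sub>2. 0 < a\<^sub>1 \<and> 0 < a\<^sub>2 \<and> 0 < b\<^sub>1 \<and> 0 < b\<^sub>2 \<and>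
    (\<forall>N K p. N \<ge> max 2 N\<^sub>0 \<longrightarrow> real K \<ge> c\<^sub>0 * real N \<longrightarrow> p \<in> task_simplex K \<longrightarrow>
       (\<forall>k\<in>{1..K}. c * real k powr (-\<alpha>) \<le> p k \<and> p k \<le> C * real k powr (-\<alpha>)) \<longrightarrow>
       a\<^sub>1 * real N powr (-1 + 1/\<alpha>) \<le> L_same N K p \<and>
       L_same N K p \<le> a\<^sub>2 * real N powr (-1 + 1/\<alpha>) \<and>
       b\<^sub>1 * real N powr (-\<alpha> + 1) \<le> L_star N K p \<and>
       L_star N K p \<le> b\<^sub>2 * real N powr (-\<alpha> + 1))"
proof -
  define d where "d = min c\<^sub>0 1"
  define a\<^sub>1 where "a\<^sub>1 = c * exp (-2) * 2 powr (1 - 2*\<alpha>) * C powr (-1 + 1/\<alpha>)"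
  define a\<^sub>2 where "a\<^sub>2 = 1 + C * 2 powr (\<alpha> - 1) / (\<alpha> - 1)"
  define b\<^sub>1 where "b\<^sub>1 = c * exp (-2/d)"
  define b\<^sub>2 where "b\<^sub>2 = C * (exp (-1) + 1 / (\<alpha> - 1)) * (2 * (\<alpha> + 1)) powr (\<alpha> - 1)"
  have d: "0 < d" "d \<le> 1" "d \<le> c\<^sub>0" and "C > 0"
    using assms by (auto simp: d_def)
  have "\<forall>\<^sub>F N in sequentially. 1 \<le> C * real N \<and> 2 \<le> d * real N \<and> \<alpha> + 1 \<le> real N \<and>
      2 * ((C * real N) powr (1/\<alpha>) + 1) \<le> c\<^sub>0 * real N"
    using assms \<open>C > 0\<close> d(1) by (intro eventually_conj) real_asymp+
  then obtain N\<^sub>0 where N\<^sub>0: "\<And>N. N \<ge> N\<^sub>0 \<Longrightarrow> 1 \<le> C * real N \<and> 2 \<le> d * real N \<and>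
      \<alpha> + 1 \<le> real N \<and> 2 * ((C * real N) powr (1/\<alpha>) + 1) \<le> c\<^sub>0 * real N"
    unfolding eventually_sequentially by blast
  have "a\<^sub>1 * real N powr (-1 + 1/\<alpha>) \<le> L_same N K p \<and>
      L_same N K p \<le> a\<^sub>2 * real N powr (-1 + 1/\<alpha>) \<and>
      b\<^sub>1 * real N powr (-\<alpha> + 1) \<le> L_star N K p \<and>
      L_star N K p \<le> b\<^sub>2 * real N powr (-\<alpha> + 1)"
    if "max 2 N\<^sub>0 \<le> N" and "c\<^sub>0 * real N \<le> real K" and p: "p \<in> task_simplex K"
      and p_bounds: "\<forall>k\<in>{1..K}. c * real k powr (-\<alpha>) \<le> p k \<and> p k \<le> C * real k powr (-\<alpha>)"
    for N K p
  proof -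
    have N: "N \<ge> 2" "1 \<le> C * real N" "2 \<le> d * real N" "\<alpha> + 1 \<le> real N"
      using that(1) N\<^sub>0[of N] by auto
    have K: "2 * ((C * real N) powr (1/\<alpha>) + 1) \<le> real K"
      using that(1,2) N\<^sub>0[of N] by auto
    have "d * real N \<le> c\<^sub>0 * real N"
      using d(3) by (intro mult_right_mono) auto
    then have dN: "d * real N \<le> real K"
      using that(2) by linarith
    then have "K \<ge> 1"
      using N(3) by linarith
    show ?thesis
      unfolding a\<^sub>1_def a\<^sub>2_def b\<^sub>1_def b\<^sub>2_def
      using L_same_lower[OF assms(1) _ \<open>C > 0\<close> N(1,2) K p p_bounds]
        L_same_upper[OF assms(1) _ _ p] L_star_lower[OF assms(1) _ d(1,2) N(3) dN p]
        L_star_upper[OF assms(1) _ \<open>K \<ge> 1\<close> N(4) p] assms p_bounds N \<open>C > 0\<close> by auto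
  qed
  moreover have "0 < a\<^sub>1" "0 < a\<^sub>2" "0 < b\<^sub>1" "0 < b\<^sub>2"
    unfolding a\<^sub>1_def a\<^sub>2_def b\<^sub>1_def b\<^sub>2_def using assms \<open>C > 0\<close>
    by (auto intro!: mult_pos_pos add_pos_pos add_pos_nonneg)
  ultimately show ?thesis
    by blast
qed

end
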